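(* Let $n\equiv 3\pmod 4$ with $n>3$. Let $1\le r\le m$, let $M_r\in\mathfrak{C}_r$, and suppose $\det\tilde M_r>0$. Then the set of elements $E_m\in\mathfrak{E}_m$ with $\det\tilde E_m>0$ is non-empty.
   Context: Fix an integer $n\equiv 3\pmod 4$, $n>3$. For $m\ge1$, $\mathfrak{C}_m$ is the set of symmetric positive definite $m\times m$ integer matrices $C=(c_{ij})$ with $c_{ii}=n$ and $c_{ij}\equiv n\pmod 4$ for all $i,j$. Given a fixed $M_r\in\mathfrak{C}_r$, for $m\ge r$, $\mathfrak{E}_m$ is the set of $E_m\in\mathfrak{C}_m$ whose leading $r\times r$ submatrix is $M_r$. For a square matrix $C$ of order $m$, $\tilde C$ denotes the matrix obtained from $C$ by replacing its $(m,m)$ entry by $3$. *)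

theory Defs
  imports "Jordan_Normal_Form.Determinant"
begin

definition pos_def_int_mat :: "int mat \<Rightarrow> bool" where
  "pos_def_int_mat C \<longleftrightarrow> (\<exists>m. C \<in> carrier_mat m m \<and>
     (\<forall>x \<in> carrier_vec m. x \<noteq> 0\<^sub>v m \<longrightarrow>
        x \<bullet> (map_mat (of_int :: int \<Rightarrow> real) C *\<^sub>v x) > 0))"

definition frakC :: "int \<Rightarrow> nat \<Rightarrow> int mat set" where
  "frakC n m = {C. C \<in> carrier_mat m m \<and> transpose_mat C = C \<and> pos_def_int_mat C \<and>
     (\<forall>i<m. C $$ (i,i) = n) \<and> (\<forall>i<m. \<forall>j<m. C $$ (i,j) mod 4 = n mod 4)}"

definition frakE :: "int \<Rightarrow> int mat \<Rightarrow> nat \<Rightarrow> int mat set" where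
  "frakE n M m = {E \<in> frakC n m. \<forall>i < dim_row M. \<forall>j < dim_row M. E $$ (i,j) = M $$ (i,j)}"

definition tilde :: "int mat \<Rightarrow> int mat" where
  "tilde C = mat (dim_row C) (dim_col C)
     (\<lambda>(i,j). if i = dim_row C - 1 \<and> j = dim_col C - 1 then 3 else C $$ (i,j))"

end

theory Submission
  imports Defs
begin

(* Extend M by repeating its last index: the extension E with n on the diagonal and 3 between
   repeated indices is, over the reals, P^T (tilde M) P + (n - 3) D, where P collapses the
   indices i >= r - 1 onto r - 1 and D is the diagonal indicator of those indices; tilde E is
   the same with the last index dropped from D.
   The matrix tilde M is positive definite: its leading (r-1)-block is that of M, and
   det (tilde M) > 0, so completing the square against its last cofactor row (one step of
   Sylvester's criterion) shows positivity. A form P^T N P + d D' with N positive definite,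
   d > 0 and D' missing at most the last collapsed index is again positive definite. Hence E
   and tilde E are positive definite, and positive definite matrices have positive
   determinant. *)

definition bilin_form :: "nat \<Rightarrow> real mat \<Rightarrow> (nat \<Rightarrow> real) \<Rightarrow> (nat \<Rightarrow> real) \<Rightarrow> real" where
  "bilin_form k A x y = (\<Sum>i<k. \<Sum>j<k. x i * A $$ (i,j) * y j)"

definition pos_definite :: "nat \<Rightarrow> real mat \<Rightarrow> bool" where
  "pos_definite k A \<longleftrightarrow> (\<forall>x. (\<exists>i<k. x i \<noteq> 0) \<longrightarrow> bilin_form k A x x > 0)"

lemma bilin_form_cong:
  assumes "\<And>i. i < k \<Longrightarrow> x i = x' i" and "\<And>i. i < k \<Longrightarrow> y i = y' i"
  shows "bilin_form k A x y = bilin_form k A x' y'"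
  unfolding bilin_form_def using assms by (intro sum.cong) auto

lemma bilin_form_nonneg:
  assumes "pos_definite k A"
  shows "bilin_form k A x x \<ge> 0"
proof (cases "\<exists>i<k. x i \<noteq> 0")
  case True
  then show ?thesis using assms unfolding pos_definite_def by (meson less_imp_le)
next
  case False
  then have "bilin_form k A x x = bilin_form k A (\<lambda>_. 0) (\<lambda>_. 0)"
    by (intro bilin_form_cong) auto
  then show ?thesis by (simp add: bilin_form_def)
qed

lemma bilin_form_eq_row_sums:
  "bilin_form k A x y = (\<Sum>i<k. x i * (\<Sum>j<k. A $$ (i,j) * y j))"
  unfolding bilin_form_def by (simp add: sum_distrib_left mult.assoc)

lemma bilin_form_add_left:
  "bilin_form k A (\<lambda>i. a * u i + w i) z = a * bilin_form k A u z + bilin_form k A w z"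
  unfolding bilin_form_def by (simp add: algebra_simps sum.distrib sum_distrib_left)

lemma bilin_form_add_right:
  "bilin_form k A z (\<lambda>i. a * u i + w i) = a * bilin_form k A z u + bilin_form k A z w"
  unfolding bilin_form_def by (simp add: algebra_simps sum.distrib sum_distrib_left)

lemma bilin_form_commute:
  assumes "\<forall>i<k. \<forall>j<k. A $$ (i,j) = A $$ (j,i)"
  shows "bilin_form k A x y = bilin_form k A y x"
proof -
  have "bilin_form k A x y = (\<Sum>j<k. \<Sum>i<k. x i * A $$ (i,j) * y j)"
    unfolding bilin_form_def by (rule sum.swap)
  also have "\<dots> = bilin_form k A y x"
    unfolding bilin_form_def using assms
    by (intro sum.cong refl) (auto simp: mult.commute mult.left_commute)
  finally show ?thesis .
qed

lemma bilin_form_mat_delete_last: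
  assumes A: "A \<in> carrier_mat (Suc k) (Suc k)" and "y k = 0"
  shows "bilin_form (Suc k) A y y = bilin_form k (mat_delete A k k) y y"
  unfolding bilin_form_def using assms by (simp add: lessThan_Suc mat_delete_def)

lemma bilin_form_vec:
  assumes "A \<in> carrier_mat m m" and "x \<in> carrier_vec m"
  shows "x \<bullet> (A *\<^sub>v x) = bilin_form m A (($) x) (($) x)"
  unfolding bilin_form_eq_row_sums scalar_prod_def using assms
  by (intro sum.cong) (auto simp: scalar_prod_def atLeast0LessThan)

lemma pos_def_int_mat_iff:
  assumes C: "C \<in> carrier_mat m m"
  shows "pos_def_int_mat C \<longleftrightarrow> pos_definite m (map_mat real_of_int C)"
proof
  assume "pos_def_int_mat C"
  then have pos: "x \<bullet> (map_mat real_of_int C *\<^sub>v x) > 0"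
    if "x \<in> carrier_vec m" "x \<noteq> 0\<^sub>v m" for x
    using C that unfolding pos_def_int_mat_def by fastforce
  show "pos_definite m (map_mat real_of_int C)"
    unfolding pos_definite_def
  proof (intro allI impI)
    fix y :: "nat \<Rightarrow> real"
    assume "\<exists>i<m. y i \<noteq> 0"
    then have "vec m y \<noteq> 0\<^sub>v m" by (metis index_vec index_zero_vec(1))
    then have "vec m y \<bullet> (map_mat real_of_int C *\<^sub>v vec m y) > 0" by (intro pos) auto
    also have "vec m y \<bullet> (map_mat real_of_int C *\<^sub>v vec m y)
        = bilin_form m (map_mat real_of_int C) y y"
      using C by (subst bilin_form_vec) (auto intro: bilin_form_cong)
    finally show "bilin_form m (map_mat real_of_int C) y y > 0" .
  qed
next
  assume pos: "pos_definite m (map_mat real_of_int C)"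
  show "pos_def_int_mat C"
    unfolding pos_def_int_mat_def
  proof (intro exI[of _ m] conjI ballI impI)
    fix x :: "real vec"
    assume x: "x \<in> carrier_vec m" and "x \<noteq> 0\<^sub>v m"
    then have "\<exists>i<m. x $ i \<noteq> 0" by (metis eq_vecI index_zero_vec carrier_vecD)
    then show "x \<bullet> (map_mat real_of_int C *\<^sub>v x) > 0"
      using pos C x by (simp add: bilin_form_vec pos_definite_def)
  qed (rule C)
qed

lemma pos_definite_mat_delete_last:
  assumes A: "A \<in> carrier_mat (Suc k) (Suc k)" and pos: "pos_definite (Suc k) A"
  shows "pos_definite k (mat_delete A k k)"
  unfolding pos_definite_def
proof (intro allI impI)
  fix y :: "nat \<Rightarrow> real"
  assume "\<exists>i<k. y i \<noteq> 0"
  then have "\<exists>i<Suc k. (y(k := 0)) i \<noteq> 0" by force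
  then have "bilin_form (Suc k) A (y(k := 0)) (y(k := 0)) > 0"
    using pos unfolding pos_definite_def by blast
  also have "bilin_form (Suc k) A (y(k := 0)) (y(k := 0))
      = bilin_form k (mat_delete A k k) (y(k := 0)) (y(k := 0))"
    using A by (simp add: bilin_form_mat_delete_last)
  also have "\<dots> = bilin_form k (mat_delete A k k) y y"
    by (intro bilin_form_cong) auto
  finally show "bilin_form k (mat_delete A k k) y y > 0" .
qed

lemma sum_mult_cofactor:
  assumes A: "A \<in> carrier_mat n n" and "i < n" and "l < n"
  shows "(\<Sum>j<n. A $$ (i,j) * cofactor A l j) = (if i = l then det A else 0)"
proof -
  have "(\<Sum>j<n. A $$ (i,j) * cofactor A l j) = (A * adj_mat A) $$ (i,l)"
    using assms adj_mat(1)[OF A]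
    by (auto simp: scalar_prod_def adj_mat_def atLeast0LessThan intro: sum.cong)
  also have "\<dots> = (if i = l then det A else 0)"
    using assms by (simp add: adj_mat(2)[OF A])
  finally show ?thesis .
qed

lemma cofactor_last_diag: "cofactor A k k = det (mat_delete A k k)"
  unfolding cofactor_def by (simp add: mult_2[symmetric] power_mult)

lemma bilin_form_cofactor_right:
  assumes A: "A \<in> carrier_mat (Suc k) (Suc k)"
  shows "bilin_form (Suc k) A w (cofactor A k) = w k * det A"
proof -
  have "bilin_form (Suc k) A w (cofactor A k) = (\<Sum>i<Suc k. w i * (if i = k then det A else 0))"
    unfolding bilin_form_eq_row_sums using sum_mult_cofactor[OF A] by (intro sum.cong) auto
  then show ?thesis by simp
qed

lemma pos_definite_det_pos:
  "A \<in> carrier_mat k k \<Longrightarrow> pos_definite k A \<Longrightarrow> det A > 0"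
proof (induction k arbitrary: A)
  case 0
  then have "A = 1\<^sub>m 0" by (intro eq_matI) auto
  then show ?case by simp
next
  case (Suc k)
  have delete_pos: "det (mat_delete A k k) > 0"
    using Suc mat_delete_carrier[of A "Suc k" "Suc k" k k] pos_definite_mat_delete_last by simp
  then have "cofactor A k k \<noteq> 0" by (simp add: cofactor_last_diag)
  then have "bilin_form (Suc k) A (cofactor A k) (cofactor A k) > 0"
    using Suc.prems(2) unfolding pos_definite_def by blast
  then have "det (mat_delete A k k) * det A > 0"
    by (simp add: bilin_form_cofactor_right[OF Suc.prems(1)] cofactor_last_diag)
  with delete_pos show ?case by (simp add: zero_less_mult_iff)
qed

text \<open>Completing the square against the cofactor vector v of the last row, for which
  A v = det A e_k and v_k = det D: the part of y along v contributes the Schur complement,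
  and the remainder w has w_k = 0, so only D sees it.\<close>
lemma bilin_form_complete_square:
  fixes A :: "real mat" and y :: "nat \<Rightarrow> real"
  assumes A: "A \<in> carrier_mat (Suc k) (Suc k)"
    and sym: "\<forall>i<Suc k. \<forall>j<Suc k. A $$ (i,j) = A $$ (j,i)"
    and D: "det (mat_delete A k k) \<noteq> 0"
  defines "a \<equiv> y k / det (mat_delete A k k)"
  defines "w \<equiv> \<lambda>i. y i - a * cofactor A k i"
  shows "bilin_form (Suc k) A y y
    = (y k)\<^sup>2 * det A / det (mat_delete A k k) + bilin_form k (mat_delete A k k) w w"
proof -
  let ?B = "bilin_form (Suc k) A" and ?v = "cofactor A k"
  have y: "y = (\<lambda>i. a * ?v i + w i)" unfolding w_def by simp
  have wk: "w k = 0" unfolding w_def a_def using D by (simp add: cofactor_last_diag)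
  have "?B y y = a * (a * ?B ?v ?v + ?B ?v w) + (a * ?B w ?v + ?B w w)"
    by (subst (1 2) y) (simp only: bilin_form_add_left bilin_form_add_right)
  also have "?B ?v w = ?B w ?v" by (rule bilin_form_commute[OF sym])
  also have "?B w ?v = 0" using wk by (simp add: bilin_form_cofactor_right[OF A])
  also have "?B ?v ?v = det (mat_delete A k k) * det A"
    by (simp add: bilin_form_cofactor_right[OF A] cofactor_last_diag)
  also have "?B w w = bilin_form k (mat_delete A k k) w w"
    using A wk by (rule bilin_form_mat_delete_last)
  finally show ?thesis
    unfolding a_def using D by (simp add: power2_eq_square field_simps)
qed

lemma pos_definite_bordered:
  fixes A :: "real mat"
  assumes A: "A \<in> carrier_mat (Suc k) (Suc k)"
    and sym: "\<forall>i<Suc k. \<forall>j<Suc k. A $$ (i,j) = A $$ (j,i)"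
    and D: "pos_definite k (mat_delete A k k)"
    and det: "det A > 0"
  shows "pos_definite (Suc k) A"
  unfolding pos_definite_def
proof (intro allI impI)
  fix y :: "nat \<Rightarrow> real"
  assume y: "\<exists>i<Suc k. y i \<noteq> 0"
  let ?D = "mat_delete A k k"
  let ?w = "\<lambda>i. y i - y k / det ?D * cofactor A k i"
  have "det ?D > 0"
    using D mat_delete_carrier[OF A, of k k] by (simp add: pos_definite_det_pos)
  then have split: "bilin_form (Suc k) A y y = (y k)\<^sup>2 * det A / det ?D + bilin_form k ?D ?w ?w"
    by (simp add: bilin_form_complete_square[OF A sym])
  show "bilin_form (Suc k) A y y > 0"
  proof (cases "y k = 0")
    case True
    then have "\<exists>i<k. ?w i \<noteq> 0" using y less_Suc_eq by auto
    then show ?thesis using split True D unfolding pos_definite_def by simp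
  next
    case False
    then have "(y k)\<^sup>2 * det A / det ?D > 0" using det \<open>det ?D > 0\<close> by simp
    then show ?thesis using split bilin_form_nonneg[OF D, of ?w] by linarith
  qed
qed

definition fiber_sum :: "nat \<Rightarrow> (nat \<Rightarrow> nat) \<Rightarrow> (nat \<Rightarrow> real) \<Rightarrow> nat \<Rightarrow> real" where
  "fiber_sum m f x a = (\<Sum>i | i < m \<and> f i = a. x i)"

lemma sum_mult_fiber_sum:
  assumes "\<forall>i<m. f i < r"
  shows "(\<Sum>i<m. x i * g (f i)) = (\<Sum>a<r. fiber_sum m f x a * g a)"
proof -
  have "(\<Sum>a<r. fiber_sum m f x a * g a)
      = (\<Sum>a<r. \<Sum>i | i \<in> {..<m} \<and> f i = a. x i * g (f i))"
    unfolding fiber_sum_def sum_distrib_right by (intro sum.cong) auto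
  also have "\<dots> = (\<Sum>i<m. x i * g (f i))"
    by (rule sum.group) (use assms in auto)
  finally show ?thesis ..
qed

lemma bilin_form_fiber_sum:
  assumes f: "\<forall>i<m. f i < r"
  shows "(\<Sum>i<m. \<Sum>j<m. x i * N $$ (f i, f j) * x j)
    = bilin_form r N (fiber_sum m f x) (fiber_sum m f x)"
proof -
  have "(\<Sum>j<m. x i * N $$ (f i, f j) * x j)
      = x i * (\<Sum>b<r. fiber_sum m f x b * N $$ (f i, b))" for i
  proof -
    have "(\<Sum>j<m. x i * N $$ (f i, f j) * x j) = x i * (\<Sum>j<m. x j * N $$ (f i, f j))"
      by (simp add: sum_distrib_left ac_simps)
    also have "\<dots> = x i * (\<Sum>b<r. fiber_sum m f x b * N $$ (f i, b))"
      using sum_mult_fiber_sum[OF f, of x "\<lambda>b. N $$ (f i, b)"] by simp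
    finally show ?thesis .
  qed
  then have "(\<Sum>i<m. \<Sum>j<m. x i * N $$ (f i, f j) * x j)
      = (\<Sum>i<m. x i * (\<Sum>b<r. fiber_sum m f x b * N $$ (f i, b)))"
    by simp
  also have "\<dots> = (\<Sum>a<r. fiber_sum m f x a * (\<Sum>b<r. fiber_sum m f x b * N $$ (a, b)))"
    by (rule sum_mult_fiber_sum[OF f])
  finally show ?thesis by (simp add: bilin_form_eq_row_sums mult.commute)
qed

lemma diag_quadratic_form:
  fixes x :: "nat \<Rightarrow> real"
  assumes "S \<subseteq> {..<m}"
  shows "(\<Sum>i<m. \<Sum>j<m. x i * (if i = j \<and> i \<in> S then d else 0) * x j)
    = d * (\<Sum>i\<in>S. (x i)\<^sup>2)"
proof -
  have "(\<Sum>j<m. x i * (if i = j \<and> i \<in> S then d else 0) * x j)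
      = (if i \<in> S then d * (x i)\<^sup>2 else 0)" if "i < m" for i
  proof -
    have "(\<Sum>j<m. x i * (if i = j \<and> i \<in> S then d else 0) * x j)
        = (\<Sum>j<m. if i = j then (if i \<in> S then d * (x i)\<^sup>2 else 0) else 0)"
      by (intro sum.cong) (auto simp: power2_eq_square)
    then show ?thesis using that by simp
  qed
  then have "(\<Sum>i<m. \<Sum>j<m. x i * (if i = j \<and> i \<in> S then d else 0) * x j)
      = (\<Sum>i<m. if i \<in> S then d * (x i)\<^sup>2 else 0)"
    by simp
  also have "\<dots> = d * (\<Sum>i\<in>S. (x i)\<^sup>2)"
    using assms by (simp add: sum.If_cases Int_absorb1 sum_distrib_left)
  finally show ?thesis .
qed

lemma fiber_sum_min:
  assumes "a < r" "r \<le> m"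
  shows "fiber_sum m (\<lambda>i. min i (r - 1)) x a
    = (if a < r - 1 then x a else (\<Sum>i\<in>{r-1..<m}. x i))"
proof -
  have "{i. i < m \<and> min i (r - 1) = a} = (if a < r - 1 then {a} else {r-1..<m})"
    using assms by (auto simp: min_def)
  then show ?thesis unfolding fiber_sum_def by simp
qed

lemma pos_definite_collapse:
  fixes N G :: "real mat"
  assumes r: "1 \<le> r" "r \<le> m" and N: "pos_definite r N" and d: "d > 0"
    and S: "{r-1..<m-1} \<subseteq> S" "S \<subseteq> {..<m}"
    and G: "\<forall>i<m. \<forall>j<m. G $$ (i,j)
      = N $$ (min i (r-1), min j (r-1)) + (if i = j \<and> i \<in> S then d else 0)"
  shows "pos_definite m G"
  unfolding pos_definite_def
proof (intro allI impI)
  fix x :: "nat \<Rightarrow> real"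
  assume x: "\<exists>i<m. x i \<noteq> 0"
  define f where "f = (\<lambda>i::nat. min i (r - 1))"
  define y where "y = fiber_sum m f x"
  have f: "\<forall>i<m. f i < r" using r unfolding f_def by auto
  have "bilin_form m G x x = (\<Sum>i<m. \<Sum>j<m. x i * N $$ (f i, f j) * x j)
      + (\<Sum>i<m. \<Sum>j<m. x i * (if i = j \<and> i \<in> S then d else 0) * x j)"
    unfolding bilin_form_def f_def using G by (simp add: algebra_simps sum.distrib)
  also have "\<dots> = bilin_form r N y y + d * (\<Sum>i\<in>S. (x i)\<^sup>2)"
    unfolding y_def by (simp add: bilin_form_fiber_sum[OF f] diag_quadratic_form[OF S(2)])
  finally have split: "bilin_form m G x x = bilin_form r N y y + d * (\<Sum>i\<in>S. (x i)\<^sup>2)" .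
  have finite_S: "finite S" using S(2) finite_subset by blast
  show "bilin_form m G x x > 0"
  proof (cases "\<exists>i\<in>S. x i \<noteq> 0")
    case True
    then have "(\<Sum>i\<in>S. (x i)\<^sup>2) > 0"
      using finite_S by (auto intro: sum_pos2)
    then show ?thesis using split d bilin_form_nonneg[OF N, of y] by (simp add: add_nonneg_pos)
  next
    case False
    then have "\<forall>i\<in>{r-1..<m-1}. x i = 0" using S(1) by blast
    moreover have "{r-1..<m} = insert (m - 1) {r-1..<m-1}" using r by auto
    ultimately have "(\<Sum>i\<in>{r-1..<m}. x i) = x (m - 1)" by simp
    then have y: "y a = (if a < r - 1 then x a else x (m - 1))" if "a < r" for a
      unfolding y_def f_def using fiber_sum_min[OF that r(2)] by simp
    obtain i where i: "i < m" "x i \<noteq> 0" using x by blast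
    then have "i \<notin> {r-1..<m-1}" using False S(1) by blast
    then consider "i < r - 1" | "i = m - 1" using i(1) by fastforce
    then have "\<exists>a<r. y a \<noteq> 0"
    proof cases
      case 1
      then have "i < r" by linarith
      then show ?thesis using 1 i y[of i] by auto
    next
      case 2
      have "r - 1 < r" using r(1) by simp
      then show ?thesis using 2 i y[of "r - 1"] by auto
    qed
    then have "bilin_form r N y y > 0" using N unfolding pos_definite_def by blast
    moreover have "(\<Sum>i\<in>S. (x i)\<^sup>2) = 0" using False by simp
    ultimately show ?thesis using split by simp
  qed
qed

lemma pos_definite_tilde:
  assumes M: "M \<in> carrier_mat r r" and r: "1 \<le> r" and sym: "transpose_mat M = M"
    and pos: "pos_def_int_mat M" and det: "det (tilde M) > 0"
  shows "pos_definite r (map_mat real_of_int (tilde M))"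
proof -
  obtain k where k: "r = Suc k" using r by (cases r) auto
  let ?A = "map_mat real_of_int (tilde M)"
  have A: "?A \<in> carrier_mat (Suc k) (Suc k)" using M k by (simp add: tilde_def)
  have "M $$ (i,j) = M $$ (j,i)" if "i < r" "j < r" for i j
    using M that by (metis carrier_matD index_transpose_mat(1) sym)
  then have "\<forall>i<Suc k. \<forall>j<Suc k. ?A $$ (i,j) = ?A $$ (j,i)"
    using M k by (auto simp: tilde_def)
  moreover have "pos_definite k (mat_delete ?A k k)"
  proof -
    have "mat_delete ?A k k = mat_delete (map_mat real_of_int M) k k"
      using M k by (intro eq_matI) (auto simp: mat_delete_def tilde_def)
    then show ?thesis
      using pos M k by (simp add: pos_def_int_mat_iff pos_definite_mat_delete_last)
  qed
  moreover have "det ?A > 0" using det by (simp add: of_int_hom.hom_det)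
  ultimately show ?thesis using pos_definite_bordered[OF A] k by simp
qed

definition extend_mat :: "int \<Rightarrow> int mat \<Rightarrow> nat \<Rightarrow> int mat" where
  "extend_mat n M m = mat m m (\<lambda>(i,j).
     if i = j then n
     else if min i (dim_row M - 1) = min j (dim_row M - 1) then 3
     else M $$ (min i (dim_row M - 1), min j (dim_row M - 1)))"

lemma map_mat_extend_mat:
  assumes M: "M \<in> carrier_mat r r" and r: "1 \<le> r" and diag: "\<forall>i<r. M $$ (i,i) = n"
  shows "\<forall>i<m. \<forall>j<m. map_mat real_of_int (extend_mat n M m) $$ (i,j)
    = map_mat real_of_int (tilde M) $$ (min i (r-1), min j (r-1))
      + (if i = j \<and> i \<in> {r-1..<m} then real_of_int n - 3 else 0)"
  using assms by (auto simp: extend_mat_def tilde_def min_def)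

lemma map_mat_tilde_extend_mat:
  assumes M: "M \<in> carrier_mat r r" and r: "1 \<le> r" "r \<le> m" and diag: "\<forall>i<r. M $$ (i,i) = n"
  shows "\<forall>i<m. \<forall>j<m. map_mat real_of_int (tilde (extend_mat n M m)) $$ (i,j)
    = map_mat real_of_int (tilde M) $$ (min i (r-1), min j (r-1))
      + (if i = j \<and> i \<in> {r-1..<m-1} then real_of_int n - 3 else 0)"
  using assms by (auto simp: extend_mat_def tilde_def min_def)

lemma extend_mat_mem_frakE:
  assumes n: "n mod 4 = 3" "n > 3" and r: "1 \<le> r" "r \<le> m" and M: "M \<in> frakC n r"
    and pos: "pos_definite r (map_mat real_of_int (tilde M))"
  shows "extend_mat n M m \<in> frakE n M m"
proof -
  let ?E = "extend_mat n M m"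
  have Mc: "M \<in> carrier_mat r r" and sym: "transpose_mat M = M"
    and diag: "\<forall>i<r. M $$ (i,i) = n" and mod4: "\<forall>i<r. \<forall>j<r. M $$ (i,j) mod 4 = n mod 4"
    using M unfolding frakC_def by auto
  have E: "?E \<in> carrier_mat m m" by (simp add: extend_mat_def)
  have E_entry: "?E $$ (i,j) = (if i = j then n else if min i (r-1) = min j (r-1) then 3
      else M $$ (min i (r-1), min j (r-1)))" if "i < m" "j < m" for i j
    using that Mc by (simp add: extend_mat_def)
  have min_less: "min i (r-1) < r" for i using r(1) by linarith
  have "pos_definite m (map_mat real_of_int ?E)"
    using n
    by (intro pos_definite_collapse[OF r pos _ _ _ map_mat_extend_mat[OF Mc r(1) diag]]) auto
  then have "pos_def_int_mat ?E" using E by (simp add: pos_def_int_mat_iff)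
  moreover have "transpose_mat ?E = ?E"
  proof (rule eq_matI)
    fix i j assume "i < dim_row ?E" "j < dim_col ?E"
    then have ij: "i < m" "j < m" using E by auto
    have "M $$ (min j (r-1), min i (r-1)) = M $$ (min i (r-1), min j (r-1))"
      using Mc sym min_less by (metis carrier_matD index_transpose_mat(1))
    then show "transpose_mat ?E $$ (i,j) = ?E $$ (i,j)"
      using ij E E_entry[OF ij] E_entry[of j i] by auto
  qed (use E in auto)
  moreover have "?E $$ (i,j) mod 4 = n mod 4" if "i < m" "j < m" for i j
    using E_entry[OF that] mod4 min_less n(1) by auto
  moreover have "?E $$ (i,j) = M $$ (i,j)" if "i < r" "j < r" for i j
  proof -
    have "min i (r-1) = i" "min j (r-1) = j" using that by auto
    then show ?thesis using that r(2) E_entry[of i j] diag by auto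
  qed
  ultimately show ?thesis
    using E Mc E_entry unfolding frakE_def frakC_def by auto
qed

lemma det_tilde_extend_mat_pos:
  assumes n: "n > 3" and r: "1 \<le> r" "r \<le> m"
    and M: "M \<in> carrier_mat r r" and diag: "\<forall>i<r. M $$ (i,i) = n"
    and pos: "pos_definite r (map_mat real_of_int (tilde M))"
  shows "det (tilde (extend_mat n M m)) > 0"
proof -
  let ?T = "tilde (extend_mat n M m)"
  have T: "?T \<in> carrier_mat m m" by (simp add: extend_mat_def tilde_def)
  have "pos_definite m (map_mat real_of_int ?T)"
    using n
    by (intro pos_definite_collapse[OF r pos _ _ _ map_mat_tilde_extend_mat[OF M r diag]]) auto
  then have "det (map_mat real_of_int ?T) > 0"
    using T by (intro pos_definite_det_pos) auto
  then show ?thesis by (simp add: of_int_hom.hom_det)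
qed

theorem theorem6:
  fixes n :: int and r m :: nat and M :: "int mat"
  assumes "n mod 4 = 3" and "n > 3"
    and "1 \<le> r" and "r \<le> m"
    and "M \<in> frakC n r"
    and "det (tilde M) > 0"
  shows "{E \<in> frakE n M m. det (tilde E) > 0} \<noteq> {}"
proof -
  have M: "M \<in> carrier_mat r r" "transpose_mat M = M" "pos_def_int_mat M"
    and diag: "\<forall>i<r. M $$ (i,i) = n"
    using assms(5) unfolding frakC_def by auto
  have "pos_definite r (map_mat real_of_int (tilde M))"
    using pos_definite_tilde[OF M(1) assms(3) M(2,3) assms(6)] .
  then have "extend_mat n M m \<in> frakE n M m" and "det (tilde (extend_mat n M m)) > 0"
    using extend_mat_mem_frakE[OF assms(1-5)] det_tilde_extend_mat_pos[OF assms(2-4) M(1) diag]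
    by auto
  then show ?thesis by blast
qed

end
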